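(* Let $\lambda\in(0,1)$. A nonconstant meromorphic solution $\partial$ of the differential equation $9\,\partial^2(\partial')^2=2(1-\partial^2)(4\partial^3-3\partial+1-2\lambda^2)$ can have no zeros.
   Context: Here $\partial$ denotes an unknown meromorphic function of a complex variable (on a connected open subset of $\mathbb{C}$), not an operator; $\partial'$ is its derivative. *)

theory Defs
  imports "HOL-Complex_Analysis.Complex_Analysis"
begin

end

theory Submission
  imports Defs
begin

text \<open>
  Suppose \<open>\<partial>(z\<^sub>0) = 0\<close>. Since \<open>\<partial>\<close> is nonconstant, the zero is isolated, so after removing
  the singularity \<open>\<partial>\<close> is analytic at \<open>z\<^sub>0\<close>. Evaluating the equation at \<open>z\<^sub>0\<close> forces
  \<open>1 - 2\<lambda>\<^sup>2 = 0\<close>; then one factor \<open>\<partial>\<close> cancels on both sides, and evaluating again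
  gives \<open>0 = -6\<close>.
\<close>

lemma isCont_eventually_eq_imp_eq:
  fixes f g :: "'a::{t2_space, perfect_space} \<Rightarrow> 'b::t2_space"
  assumes "isCont f z" "isCont g z" "eventually (\<lambda>w. f w = g w) (at z)"
  shows "f z = g z"
proof -
  have "(f \<longlongrightarrow> g z) (at z)"
    using isContD[OF assms(2)] tendsto_cong[OF assms(3)] by simp
  with isContD[OF assms(1)] show ?thesis
    using tendsto_unique at_neq_bot by blast
qed

lemma meromorphic_nonconstant_eventually_neq:
  assumes "f meromorphic_on U" "open U" "connected U" "z0 \<in> U"
    and nonconst: "\<not> (\<forall>z\<in>U. f analytic_on {z} \<longrightarrow> f z = c)"
  shows "eventually (\<lambda>z. f z \<noteq> c) (at z0)"
proof -
  have "\<not> eventually (\<lambda>z. f z = c) (cosparse U)"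
  proof
    assume const: "eventually (\<lambda>z. f z = c) (cosparse U)"
    have "f z = c" if "z \<in> U" "f analytic_on {z}" for z
    proof -
      have "isCont f z"
        using that(2) by (rule analytic_at_imp_isCont)
      moreover have "eventually (\<lambda>w. f w = c) (at z)"
        using const that(1) assms(2) eventually_cosparse_open_eq by blast
      ultimately show ?thesis
        using isCont_eventually_eq_imp_eq[where g = "\<lambda>_. c"] by simp
    qed
    with nonconst show False by blast
  qed
  then have "eventually (\<lambda>z. f z \<noteq> c) (cosparse U)"
    using meromorphic_imp_constant_or_avoid[OF assms(1-3)] by blast
  then show ?thesis
    using assms(2,4) eventually_cosparse_open_eq by blast
qed

lemma ode_solution_has_no_isolated_analytic_zero:
  fixes g :: "complex \<Rightarrow> complex" and c :: complex
  assumes analytic: "g analytic_on {z0}" and zero: "g z0 = 0"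
    and isolated: "eventually (\<lambda>z. g z \<noteq> 0) (at z0)"
    and ode: "eventually (\<lambda>z. 9 * (g z)\<^sup>2 * (deriv g z)\<^sup>2
                = 2 * (1 - (g z)\<^sup>2) * (4 * (g z)^3 - 3 * g z + c)) (at z0)"
  shows False
proof -
  have g_cont: "isCont g z0" and dg_cont: "isCont (deriv g) z0"
    using analytic analytic_deriv analytic_at_imp_isCont by blast+
  have "9 * (g z0)\<^sup>2 * (deriv g z0)\<^sup>2 = 2 * (1 - (g z0)\<^sup>2) * (4 * (g z0)^3 - 3 * g z0 + c)"
    by (rule isCont_eventually_eq_imp_eq[OF _ _ ode]) (intro continuous_intros g_cont dg_cont)+
  then have c0: "c = 0"
    using zero by simp
  have reduced: "eventually (\<lambda>z. 9 * g z * (deriv g z)\<^sup>2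
                   = 2 * (1 - (g z)\<^sup>2) * (4 * (g z)\<^sup>2 - 3)) (at z0)"
    using isolated ode
  proof eventually_elim
    case (elim z)
    then have "g z * (9 * g z * (deriv g z)\<^sup>2) = g z * (2 * (1 - (g z)\<^sup>2) * (4 * (g z)\<^sup>2 - 3))"
      using c0 by (simp add: power2_eq_square power3_eq_cube algebra_simps)
    with elim show ?case
      by simp
  qed
  have "9 * g z0 * (deriv g z0)\<^sup>2 = 2 * (1 - (g z0)\<^sup>2) * (4 * (g z0)\<^sup>2 - 3)"
    by (rule isCont_eventually_eq_imp_eq[OF _ _ reduced]) (intro continuous_intros g_cont dg_cont)+
  then show False
    using zero by simp
qed

theorem theorem7:
  fixes f :: "complex \<Rightarrow> complex" and U :: "complex set" and l :: real
  assumes "0 < l" and "l < 1"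
    and "open U" and "connected U"
    and "f meromorphic_on U"
    and nonconst: "\<not> (\<exists>c. \<forall>z\<in>U. f analytic_on {z} \<longrightarrow> f z = c)"
    and ode: "\<forall>z\<in>U. f analytic_on {z} \<longrightarrow>
      9 * (f z)\<^sup>2 * (deriv f z)\<^sup>2
        = 2 * (1 - (f z)\<^sup>2) * (4 * (f z)^3 - 3 * f z + 1 - 2 * (complex_of_real l)\<^sup>2)"
  shows "\<forall>z\<in>U. \<not> (f \<longlongrightarrow> 0) (at z)"
proof (intro ballI notI)
  fix z0 assume z0: "z0 \<in> U" and lim: "(f \<longlongrightarrow> 0) (at z0)"
  define g where "g = remove_sings f"
  have "isolated_singularity_at f z0"
    using assms(5) z0 by (meson meromorphic_on_isolated_singularity meromorphic_on_subset empty_subsetI insert_subset)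
  then have "g analytic_on {z0}"
    unfolding g_def using lim by (rule remove_sings_analytic_at)
  moreover have "g z0 = 0"
    unfolding g_def using lim by (rule remove_sings_eqI)
  moreover have "eventually (\<lambda>z. z \<in> U \<and> f analytic_on {z} \<and> f z \<noteq> 0) (at z0)"
  proof (intro eventually_conj)
    show "eventually (\<lambda>z. z \<in> U) (at z0)"
      using assms(3) z0 by (rule eventually_at_in_open')
    show "eventually (\<lambda>z. f analytic_on {z}) (at z0)"
      using meromorphic_on_imp_analytic_cosparse[OF assms(5)] z0 assms(3) eventually_cosparse_open_eq by blast
    show "eventually (\<lambda>z. f z \<noteq> 0) (at z0)"
      using meromorphic_nonconstant_eventually_neq[OF assms(5,3,4) z0] nonconst by blast
  qed
  then have "eventually (\<lambda>z. g z \<noteq> 0) (at z0)"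
    and "eventually (\<lambda>z. 9 * (g z)\<^sup>2 * (deriv g z)\<^sup>2
           = 2 * (1 - (g z)\<^sup>2) * (4 * (g z)^3 - 3 * g z + (1 - 2 * (complex_of_real l)\<^sup>2))) (at z0)"
    by (eventually_elim, use ode in \<open>auto simp: g_def algebra_simps\<close>)+
  ultimately show False
    by (rule ode_solution_has_no_isolated_analytic_zero)
qed

end
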